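(* For every integer $n\ge1$, let $G_n=H_1\vee H_2\vee\cdots\vee H_n$ be a simple complete multipartite graph where each $H_i$ is an independent set with $s_i>(n-1)^2$ vertices. Then for every prime power $q$, $\operatorname{mr}(\mathbb{F}_q,G_n)\le 3$ if and only if $q\ge n-1$.
   Context: $\vee$ denotes the join: the disjoint union together with all edges between vertices of different constituents. For a field $F$ and a simple graph $G$ on vertices $\{1,\dots,n\}$, $S(F,G)$ is the set of symmetric $n\times n$ matrices $A$ over $F$ with $a_{ij}\neq 0$ for $i\ne j$ iff $ij$ is an edge of $G$ (diagonal entries unrestricted), and $\operatorname{mr}(F,G)=\min\{\operatorname{rank}A: A\in S(F,G)\}$. *)

theory Defs
  imports "Jordan_Normal_Form.DL_Rank"
begin

text \<open>A simple graph on the vertex set {0..<N} is given by an edge predicate E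
  (assumed symmetric and irreflexive where relevant).\<close>

definition S_mat :: "nat \<Rightarrow> (nat \<Rightarrow> nat \<Rightarrow> bool) \<Rightarrow> 'a::field mat set" where
  "S_mat N E = {A. A \<in> carrier_mat N N \<and> transpose_mat A = A \<and>
     (\<forall>i<N. \<forall>j<N. i \<noteq> j \<longrightarrow> (A $$ (i, j) \<noteq> 0 \<longleftrightarrow> E i j))}"

definition mr :: "'a::field itself \<Rightarrow> nat \<Rightarrow> (nat \<Rightarrow> nat \<Rightarrow> bool) \<Rightarrow> nat" where
  "mr _ N E = Min {vec_space.rank N A | A. A \<in> (S_mat N E :: 'a mat set)}"

text \<open>Complete multipartite graph on {0..<N}: vertices u, v are adjacent iff they
  lie in different parts, where part v is the index of the part containing v.\<close>
definition multipartite_edge :: "(nat \<Rightarrow> nat) \<Rightarrow> nat \<Rightarrow> nat \<Rightarrow> bool" where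
  "multipartite_edge part u v \<longleftrightarrow> part u \<noteq> part v"

end

theory Submission
  imports Defs "Jordan_Normal_Form.DL_Rank_Submatrix" "HOL-Library.Cardinality"
begin

text \<open>
  Upper bound: label the parts injectively by the \<open>q + 1\<close> points of the projective
  line, mapped onto the conic \<open>\<beta>\<^sup>2 = \<alpha> \<gamma>\<close> in \<open>F\<^sup>3\<close>; the Gram matrix of these conic
  points for the polar form of \<open>\<alpha> \<gamma> - \<beta>\<^sup>2\<close> has rank at most 3 and lies in \<open>S(F, G)\<close>.

  Lower bound: rank at most 3 makes all \<open>4 \<times> 4\<close> minors vanish. A part with at least
  four vertices is an independent set, so its principal minors are diagonal and some
  vertex of it has zero diagonal entry. One such vertex per part gives a symmetric
  \<open>n \<times> n\<close> matrix with zero diagonal, nonzero off-diagonal entries and vanishing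
  \<open>4 \<times> 4\<close> minors (locale \<open>hollow_rank3\<close>). Normalising by the first three vertices,
  each further vertex gives a distinct point of a conic missing two points of a
  rational parametrisation, whence \<open>n - 3 \<le> q - 2\<close>.
\<close>

section \<open>Minors\<close>

definition minor :: "(nat \<Rightarrow> nat \<Rightarrow> 'a::comm_ring_1) \<Rightarrow> nat list \<Rightarrow> nat list \<Rightarrow> 'a" where
  "minor M rs cs = det (mat (length rs) (length cs) (\<lambda>(i, j). M (rs ! i) (cs ! j)))"

lemma det_mat_Suc:
  fixes f :: "nat \<Rightarrow> nat \<Rightarrow> 'a::comm_ring_1"
  shows "det (mat (Suc n) (Suc n) (\<lambda>(i, j). f i j)) =
    (\<Sum>i<Suc n. f i 0 * ((-1)^i *
       det (mat n n (\<lambda>(i', j'). f (if i' < i then i' else Suc i') (Suc j')))))"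
proof -
  let ?A = "mat (Suc n) (Suc n) (\<lambda>(i, j). f i j)"
  have "det ?A = (\<Sum>i<Suc n. ?A $$ (i, 0) * cofactor ?A i 0)"
    by (rule laplace_expansion_column) auto
  also have "\<dots> = (\<Sum>i<Suc n. f i 0 * ((-1)^i *
       det (mat n n (\<lambda>(i', j'). f (if i' < i then i' else Suc i') (Suc j')))))"
  proof (rule sum.cong[OF refl])
    fix i assume i: "i \<in> {..<Suc n}"
    have "mat_delete ?A i 0 = mat n n (\<lambda>(i', j'). f (if i' < i then i' else Suc i') (Suc j'))"
      unfolding mat_delete_def by (rule eq_matI) auto
    then show "?A $$ (i, 0) * cofactor ?A i 0 = f i 0 * ((-1)^i *
       det (mat n n (\<lambda>(i', j'). f (if i' < i then i' else Suc i') (Suc j'))))"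
      using i by (simp add: cofactor_def)
  qed
  finally show ?thesis .
qed

lemma det_mat_4:
  fixes f :: "nat \<Rightarrow> nat \<Rightarrow> 'a::comm_ring_1"
  shows "det (mat 4 4 (\<lambda>(i, j). f i j)) =
     f 0 0*f 1 1*f 2 2*f 3 3 - f 0 0*f 1 1*f 2 3*f 3 2 - f 0 0*f 1 2*f 2 1*f 3 3
   + f 0 0*f 1 2*f 2 3*f 3 1 + f 0 0*f 1 3*f 2 1*f 3 2 - f 0 0*f 1 3*f 2 2*f 3 1
   - f 0 1*f 1 0*f 2 2*f 3 3 + f 0 1*f 1 0*f 2 3*f 3 2 + f 0 1*f 1 2*f 2 0*f 3 3
   - f 0 1*f 1 2*f 2 3*f 3 0 - f 0 1*f 1 3*f 2 0*f 3 2 + f 0 1*f 1 3*f 2 2*f 3 0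
   + f 0 2*f 1 0*f 2 1*f 3 3 - f 0 2*f 1 0*f 2 3*f 3 1 - f 0 2*f 1 1*f 2 0*f 3 3
   + f 0 2*f 1 1*f 2 3*f 3 0 + f 0 2*f 1 3*f 2 0*f 3 1 - f 0 2*f 1 3*f 2 1*f 3 0
   - f 0 3*f 1 0*f 2 1*f 3 2 + f 0 3*f 1 0*f 2 2*f 3 1 + f 0 3*f 1 1*f 2 0*f 3 2
   - f 0 3*f 1 1*f 2 2*f 3 0 - f 0 3*f 1 2*f 2 0*f 3 1 + f 0 3*f 1 2*f 2 1*f 3 0"
proof -
  have four: "(4::nat) = Suc (Suc (Suc (Suc 0)))" by simp
  have det0: "det (mat 0 0 g) = 1" for g :: "nat \<times> nat \<Rightarrow> 'a" by (simp add: det_def)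
  show ?thesis
    by (subst (1 2) four, simp only: det_mat_Suc det0 sum.lessThan_Suc sum.empty)
      (simp add: numeral_2_eq_2 numeral_3_eq_3 algebra_simps)
qed

lemma minor_4:
  "minor M [r0, r1, r2, r3] [c0, c1, c2, c3] =
     M r0 c0*M r1 c1*M r2 c2*M r3 c3 - M r0 c0*M r1 c1*M r2 c3*M r3 c2
   - M r0 c0*M r1 c2*M r2 c1*M r3 c3 + M r0 c0*M r1 c2*M r2 c3*M r3 c1
   + M r0 c0*M r1 c3*M r2 c1*M r3 c2 - M r0 c0*M r1 c3*M r2 c2*M r3 c1
   - M r0 c1*M r1 c0*M r2 c2*M r3 c3 + M r0 c1*M r1 c0*M r2 c3*M r3 c2
   + M r0 c1*M r1 c2*M r2 c0*M r3 c3 - M r0 c1*M r1 c2*M r2 c3*M r3 c0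
   - M r0 c1*M r1 c3*M r2 c0*M r3 c2 + M r0 c1*M r1 c3*M r2 c2*M r3 c0
   + M r0 c2*M r1 c0*M r2 c1*M r3 c3 - M r0 c2*M r1 c0*M r2 c3*M r3 c1
   - M r0 c2*M r1 c1*M r2 c0*M r3 c3 + M r0 c2*M r1 c1*M r2 c3*M r3 c0
   + M r0 c2*M r1 c3*M r2 c0*M r3 c1 - M r0 c2*M r1 c3*M r2 c1*M r3 c0
   - M r0 c3*M r1 c0*M r2 c1*M r3 c2 + M r0 c3*M r1 c0*M r2 c2*M r3 c1
   + M r0 c3*M r1 c1*M r2 c0*M r3 c2 - M r0 c3*M r1 c1*M r2 c2*M r3 c0
   - M r0 c3*M r1 c2*M r2 c0*M r3 c1 + M r0 c3*M r1 c2*M r2 c1*M r3 c0"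
proof -
  have len: "length [r0, r1, r2, r3] = 4" "length [c0, c1, c2, c3] = 4" by simp_all
  show ?thesis unfolding minor_def len det_mat_4 by simp
qed

lemma minor_eq_0_if_not_distinct:
  fixes M :: "nat \<Rightarrow> nat \<Rightarrow> 'a::comm_ring_1"
  assumes len: "length cs = length rs" and nd: "\<not> distinct rs \<or> \<not> distinct cs"
  shows "minor M rs cs = 0"
proof -
  let ?k = "length rs"
  let ?B = "mat ?k ?k (\<lambda>(i, j). M (rs ! i) (cs ! j))"
  have B: "?B \<in> carrier_mat ?k ?k" by simp
  from nd show ?thesis
  proof
    assume "\<not> distinct rs"
    then obtain i j where ij: "i < ?k" "j < ?k" "i \<noteq> j" "rs ! i = rs ! j"
      by (auto simp: distinct_conv_nth)
    then have "row ?B i = row ?B j" by (auto intro!: eq_vecI)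
    then show ?thesis using det_identical_rows[OF B ij(3,1,2)] len by (simp add: minor_def)
  next
    assume "\<not> distinct cs"
    then obtain i j where ij: "i < ?k" "j < ?k" "i \<noteq> j" "cs ! i = cs ! j"
      using len by (auto simp: distinct_conv_nth)
    then have "col ?B i = col ?B j" using len by (auto intro!: eq_vecI)
    then show ?thesis using det_identical_cols[OF B ij(3,1,2)] len by (simp add: minor_def)
  qed
qed

lemma sorting_permutation:
  fixes xs :: "nat list"
  assumes dist: "distinct xs"
  defines "p \<equiv> (\<lambda>i. if i < length xs then card {a \<in> set xs. a < xs ! i} else i)"
  shows "p permutes {0..<length xs}" and "\<And>i. i < length xs \<Longrightarrow> pick (set xs) (p i) = xs ! i"
proof -
  let ?k = "length xs"
  show pick_p: "\<And>i. i < ?k \<Longrightarrow> pick (set xs) (p i) = xs ! i"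
    unfolding p_def by (simp add: pick_card_in_set)
  have into: "p ` {0..<?k} \<subseteq> {0..<?k}"
  proof
    fix y assume "y \<in> p ` {0..<?k}"
    then obtain i where i: "i < ?k" "y = p i" by auto
    have "xs ! i \<in> set xs" using i by simp
    then have "{a \<in> set xs. a < xs ! i} \<subset> set xs" by blast
    then have "card {a \<in> set xs. a < xs ! i} < card (set xs)" by (intro psubset_card_mono) auto
    then show "y \<in> {0..<?k}" using i dist by (simp add: p_def distinct_card)
  qed
  have inj: "inj_on p {0..<?k}"
  proof (rule inj_onI)
    fix i j assume i: "i \<in> {0..<?k}" and j: "j \<in> {0..<?k}" and eq: "p i = p j"
    have "xs ! i = xs ! j" using pick_p[of i] pick_p[of j] i j eq by simp
    then show "i = j" using nth_eq_iff_index_eq[OF dist] i j by simp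
  qed
  have "bij_betw p {0..<?k} {0..<?k}"
    using endo_inj_surj[OF _ into inj] inj by (simp add: bij_betw_def)
  then show "p permutes {0..<?k}" by (rule bij_imp_permutes) (simp add: p_def)
qed

lemma det_permute_rows_cols:
  assumes S: "S \<in> carrier_mat k k"
    and p: "p permutes {0..<k}" and q: "q permutes {0..<k}"
  shows "det (mat k k (\<lambda>(i, j). S $$ (p i, q j))) = signof p * signof q * det S"
proof -
  define C where "C = mat k k (\<lambda>(i, j). S $$ (i, q j))"
  have C: "C \<in> carrier_mat k k" by (simp add: C_def)
  have p_lt: "p i < k" and q_lt: "q i < k" if "i < k" for i
    using p q that by (simp_all add: permutes_in_image)
  have "mat k k (\<lambda>(i, j). S $$ (p i, q j)) = mat k k (\<lambda>(i, j). C $$ (p i, j))"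
    by (rule eq_matI) (simp_all add: C_def p_lt)
  also have "det \<dots> = signof p * det C" by (rule det_permute_rows[OF C p])
  also have "det C = signof q * det S"
  proof -
    have "transpose_mat C = mat k k (\<lambda>(i, j). transpose_mat S $$ (q i, j))"
      by (rule eq_matI) (use S q_lt in \<open>auto simp: C_def\<close>)
    then have "det (transpose_mat C) = signof q * det (transpose_mat S)"
      using det_permute_rows[OF _ q, of "transpose_mat S"] S by simp
    then show ?thesis using det_transpose[OF C] det_transpose[OF S] by simp
  qed
  finally show ?thesis by simp
qed

text \<open>For distinct indices the
  minor is, up to sign, a minor in the sense of \<open>submatrix\<close>, to which the library
  bound \<open>rank_gt_minor\<close> applies.\<close>
lemma minor_eq_0_if_rank_less:
  fixes A :: "'a::field mat"
  assumes A: "A \<in> carrier_mat n nc" and rank: "vec_space.rank n A < length rs"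
    and len: "length cs = length rs" and rs: "set rs \<subseteq> {..<n}" and cs: "set cs \<subseteq> {..<nc}"
  shows "minor (\<lambda>i j. A $$ (i, j)) rs cs = 0"
proof (cases "distinct rs \<and> distinct cs")
  case False
  then show ?thesis using minor_eq_0_if_not_distinct len by blast
next
  case True
  let ?k = "length rs"
  obtain p where p: "p permutes {0..<?k}" "\<And>i. i < ?k \<Longrightarrow> pick (set rs) (p i) = rs ! i"
    using sorting_permutation True by blast
  obtain q where q: "q permutes {0..<?k}" "\<And>j. j < ?k \<Longrightarrow> pick (set cs) (q j) = cs ! j"
    using sorting_permutation[of cs] True len by auto
  have rows: "{i. i < dim_row A \<and> i \<in> set rs} = set rs" using rs A by auto
  have cols: "{j. j < dim_col A \<and> j \<in> set cs} = set cs" using cs A by auto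
  have card_rs: "card (set rs) = ?k" and card_cs: "card (set cs) = ?k"
    using True len by (simp_all add: distinct_card)
  define S where "S = submatrix A (set rs) (set cs)"
  have S: "S \<in> carrier_mat ?k ?k"
    by (rule carrier_matI) (simp_all only: S_def dim_submatrix rows cols card_rs card_cs)
  have S_entry: "S $$ (p i, q j) = A $$ (rs ! i, cs ! j)" if "i < ?k" "j < ?k" for i j
    using submatrix_index[of "p i" A "set rs" "q j" "set cs"] that p q permutes_in_image
    unfolding S_def rows cols card_rs card_cs by fastforce
  have "det S = 0"
  proof (rule ccontr)
    assume "det S \<noteq> 0"
    then have "card {j. j < nc \<and> j \<in> set cs} \<le> vec_space.rank n A"
      using vec_space.rank_gt_minor[OF A] unfolding S_def by blast
    then show False using cols A card_cs rank len by simp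
  qed
  have "minor (\<lambda>i j. A $$ (i, j)) rs cs = det (mat ?k ?k (\<lambda>(i, j). S $$ (p i, q j)))"
    unfolding minor_def using len by (intro arg_cong[of _ _ det] eq_matI) (simp_all add: S_entry)
  also have "\<dots> = 0" using det_permute_rows_cols[OF S p(1) q(1)] \<open>det S = 0\<close> by simp
  finally show ?thesis .
qed

section \<open>Hollow matrices of rank at most three\<close>

locale hollow_rank3 =
  fixes n :: nat and M :: "nat \<Rightarrow> nat \<Rightarrow> 'a::field"
  assumes three_le: "3 \<le> n"
    and sym: "i < n \<Longrightarrow> j < n \<Longrightarrow> M i j = M j i"
    and diag: "i < n \<Longrightarrow> M i i = 0"
    and off_diag: "i < n \<Longrightarrow> j < n \<Longrightarrow> i \<noteq> j \<Longrightarrow> M i j \<noteq> 0"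
    and minor4: "set rs \<subseteq> {..<n} \<Longrightarrow> set cs \<subseteq> {..<n} \<Longrightarrow> length rs = 4 \<Longrightarrow> length cs = 4
      \<Longrightarrow> minor M rs cs = 0"
begin

text \<open>Affine coordinates of vertex \<open>k\<close>: its entries in rows 1 and 2, normalised by row 0.\<close>
definition cx :: "nat \<Rightarrow> 'a" where "cx k = M 1 k / M 0 k"
definition cy :: "nat \<Rightarrow> 'a" where "cy k = M 2 k / M 0 k"

lemma base_entries:
  "M 0 0 = 0" "M 1 1 = 0" "M 2 2 = 0" "M 1 0 = M 0 1" "M 2 0 = M 0 2" "M 2 1 = M 1 2"
  "M 0 1 \<noteq> 0" "M 0 2 \<noteq> 0" "M 1 2 \<noteq> 0"
  using diag sym off_diag three_le by auto

lemma vertex_entries: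
  assumes "3 \<le> k" "k < n"
  shows "M k 0 = M 0 k" "M k 1 = M 1 k" "M k 2 = M 2 k" "M k k = 0"
    "M 0 k \<noteq> 0" "M 1 k \<noteq> 0" "M 2 k \<noteq> 0"
    "M 1 k = cx k * M 0 k" "M 2 k = cy k * M 0 k" "cx k \<noteq> 0" "cy k \<noteq> 0"
  using assms diag sym off_diag three_le by (auto simp: cx_def cy_def)

lemma principal_minor_eq:
  assumes k: "3 \<le> k" "k < n"
  shows "(M 0 1 * M 2 k + M 0 2 * M 1 k - M 0 k * M 1 2)^2 = 4 * M 0 1 * M 0 2 * M 1 k * M 2 k"
proof -
  have "minor M [0, 1, 2, k] [0, 1, 2, k] = 0" by (rule minor4) (use k in auto)
  then have "(M 0 1 * M 2 k + M 0 2 * M 1 k - M 0 k * M 1 2)^2 - 4 * M 0 1 * M 0 2 * M 1 k * M 2 k = 0"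
    unfolding minor_4 using base_entries vertex_entries[OF k]
    by (simp add: algebra_simps power2_eq_square)
  then show ?thesis by simp
qed

lemma on_conic:
  assumes k: "3 \<le> k" "k < n"
  shows "(M 0 1 * cy k + M 0 2 * cx k - M 1 2)^2 = 4 * M 0 1 * M 0 2 * cx k * cy k"
proof -
  have "(M 0 k)^2 * ((M 0 1 * cy k + M 0 2 * cx k - M 1 2)^2 - 4 * M 0 1 * M 0 2 * cx k * cy k) = 0"
    using principal_minor_eq[OF k] vertex_entries[OF k] by (simp add: algebra_simps power2_eq_square)
  then show ?thesis using vertex_entries(5)[OF k] by simp
qed

text \<open>If two vertices \<open>k \<noteq> l\<close> had the same point,
  the mixed minor on rows \<open>{0,1,2,k}\<close> and columns \<open>{0,1,2,l}\<close> would force characteristic 2,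
  and then the principal minor on \<open>{0,1,k,l}\<close> would force \<open>M 0 1 * M k l = 0\<close>.\<close>
lemma points_distinct:
  assumes k: "3 \<le> k" "k < n" and l: "3 \<le> l" "l < n"
    and same: "cx k = cx l" "cy k = cy l"
  shows "k = l"
proof (rule ccontr)
  assume kl: "k \<noteq> l"
  have m: "M k l \<noteq> 0" "M l k = M k l" using off_diag sym k l kl by auto
  have "minor M [0, 1, 2, k] [0, 1, 2, l] = 0" by (rule minor4) (use k l in auto)
  moreover have "M 0 l * minor M [0, 1, 2, k] [0, 1, 2, l] =
      M 0 k * ((M 0 1 * M 2 l + M 0 2 * M 1 l - M 0 l * M 1 2)^2 - 4 * M 0 1 * M 0 2 * M 1 l * M 2 l)
      + 2 * M 0 1 * M 0 2 * M 1 2 * M k l * M 0 l"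
    unfolding minor_4 using base_entries vertex_entries[OF k] vertex_entries[OF l] same
    by (simp add: algebra_simps power2_eq_square)
  ultimately have "2 * M 0 1 * M 0 2 * M 1 2 * M k l * M 0 l = 0"
    using principal_minor_eq[OF l] by simp
  then have two: "(2::'a) = 0" using base_entries m vertex_entries[OF l] by simp
  have "minor M [0, 1, k, l] [0, 1, k, l] = 0" by (rule minor4) (use k l in auto)
  moreover have "minor M [0, 1, k, l] [0, 1, k, l] =
      (M 0 1 * M k l + M 0 k * M 1 l - M 0 l * M 1 k)^2 - 4 * M 0 1 * M 0 k * M 1 l * M k l"
    unfolding minor_4 using base_entries vertex_entries[OF k] vertex_entries[OF l] m
    by (simp add: algebra_simps power2_eq_square)
  moreover have "M 0 k * M 1 l - M 0 l * M 1 k = 0"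
    using vertex_entries[OF k] vertex_entries[OF l] same by (simp add: algebra_simps)
  moreover have "(4::'a) = 2 * 2" by simp
  ultimately have "(M 0 1 * M k l)^2 = 0" using two by (simp add: algebra_simps)
  then show False using base_entries m by simp
qed

end

section \<open>Counting points on the conic\<close>

text \<open>Away from characteristic 2, a point of the conic \<open>(a y + b x - d)\<^sup>2 = 4 a b x y\<close> is
  determined by the value of \<open>b x - a y\<close>: adding the equations
  \<open>2 d (b x + a y) = d\<^sup>2 + (b x - a y)\<^sup>2\<close> recovers \<open>b x + a y\<close> as well.\<close>
lemma conic_point_determined:
  fixes a b d x y x' y' :: "'a::field"
  assumes two: "(2::'a) \<noteq> 0" and nz: "a \<noteq> 0" "b \<noteq> 0" "d \<noteq> 0"
    and on: "(a * y + b * x - d)^2 = 4 * a * b * x * y" "(a * y' + b * x' - d)^2 = 4 * a * b * x' * y'"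
    and diff: "b * x - a * y = b * x' - a * y'"
  shows "x = x' \<and> y = y'"
proof -
  have e: "2 * d * (b * x + a * y) = d^2 + (b * x - a * y)^2"
    "2 * d * (b * x' + a * y') = d^2 + (b * x' - a * y')^2"
    using on by (simp_all add: algebra_simps power2_eq_square)
  have "2 * d * (b * x + a * y) = 2 * d * (b * x' + a * y')" using e diff by simp
  then have sum: "b * x + a * y = b * x' + a * y'" using two nz by simp
  have "2 * (b * x) = 2 * (b * x')" "2 * (a * y) = 2 * (a * y')"
    using arg_cong2[OF sum diff, of "(+)"] arg_cong2[OF sum diff, of "(-)"]
    by (simp_all add: algebra_simps)
  then show ?thesis using two nz by simp
qed

lemma card_bound_of_inj_avoiding:
  fixes \<phi> :: "nat \<Rightarrow> 'b"
  assumes fin: "finite (UNIV :: 'b set)" and z: "z1 \<noteq> z2"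
    and inj: "inj_on \<phi> {3..<n}" and avoid: "\<And>k. k \<in> {3..<n} \<Longrightarrow> \<phi> k \<noteq> z1 \<and> \<phi> k \<noteq> z2"
  shows "n \<le> card (UNIV :: 'b set) + 1"
proof -
  have "\<phi> ` {3..<n} \<subseteq> UNIV - {z1, z2}" unfolding image_subset_iff using avoid by blast
  then have "card {3..<n} \<le> card (UNIV - {z1, z2})"
    using card_inj_on_le[OF inj] fin by blast
  also have "\<dots> = card (UNIV :: 'b set) - 2" using z fin by (simp add: card_Diff_subset)
  finally have "n - 3 \<le> card (UNIV :: 'b set) - 2" by simp
  moreover have "2 \<le> card (UNIV :: 'b set)"
    using card_mono[OF fin, of "{z1, z2}"] z by simp
  ultimately show ?thesis by linarith
qed

context hollow_rank3
begin

text \<open>Away from characteristic 2 the conic is a smooth conic through the two points at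
  \<open>t = 0\<close> and \<open>t = 1\<close> below, which are not of the form \<open>(cx k, cy k)\<close>; the remaining
  points are injectively labelled by \<open>t\<close>.\<close>
lemma parameter_char_ne_2:
  assumes two: "(2::'a) \<noteq> 0"
  defines "t \<equiv> \<lambda>k. (M 0 2 * cx k - M 0 1 * cy k + M 1 2) / (2 * M 1 2)"
  shows "inj_on t {3..<n}" and "\<And>k. k \<in> {3..<n} \<Longrightarrow> t k \<noteq> 0 \<and> t k \<noteq> 1"
proof -
  have four: "(4::'a) \<noteq> 0" using two by (metis mult_eq_0_iff numeral_Bit0_eq_double one_add_one)
  show "inj_on t {3..<n}"
  proof (rule inj_onI)
    fix k l assume "k \<in> {3..<n}" "l \<in> {3..<n}" and eq: "t k = t l"
    then have k: "3 \<le> k" "k < n" and l: "3 \<le> l" "l < n" by auto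
    have "M 0 2 * cx k - M 0 1 * cy k + M 1 2 = M 0 2 * cx l - M 0 1 * cy l + M 1 2"
      using eq two base_entries(9) by (simp add: t_def)
    then have "cx k = cx l \<and> cy k = cy l"
      by (intro conic_point_determined[OF two base_entries(7-9) on_conic[OF k] on_conic[OF l]]) simp
    then show "k = l" using points_distinct k l by simp
  qed
  fix k assume "k \<in> {3..<n}"
  then have k: "3 \<le> k" "k < n" by auto
  note conic = on_conic[OF k] and nz = vertex_entries(10,11)[OF k] base_entries(7-9)
  have "M 0 2 * cx k - M 0 1 * cy k + M 1 2 \<noteq> 0"
  proof
    assume "M 0 2 * cx k - M 0 1 * cy k + M 1 2 = 0"
    then have "M 0 1 * cy k = M 0 2 * cx k + M 1 2" by (simp add: algebra_simps)
    then have "4 * M 0 2 * cx k * M 1 2 = 0" using conic by (simp add: algebra_simps power2_eq_square)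
    then show False using four nz by simp
  qed
  moreover have "M 0 2 * cx k - M 0 1 * cy k + M 1 2 \<noteq> 2 * M 1 2"
  proof
    assume "M 0 2 * cx k - M 0 1 * cy k + M 1 2 = 2 * M 1 2"
    then have "M 0 2 * cx k = M 0 1 * cy k + M 1 2" by (simp add: algebra_simps)
    then have "4 * M 0 1 * cy k * M 1 2 = 0" using conic by (simp add: algebra_simps power2_eq_square)
    then show False using four nz by simp
  qed
  ultimately show "t k \<noteq> 0 \<and> t k \<noteq> 1" using two nz by (simp add: t_def)
qed

text \<open>In characteristic 2 the conic degenerates to the line \<open>a y + b x = d\<close>; the
  coordinate \<open>cx\<close> labels its points injectively and misses \<open>0\<close> and \<open>d / b\<close>.\<close>
lemma parameter_char_2:
  assumes two: "(2::'a) = 0"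
  shows "inj_on cx {3..<n}" and "\<And>k. k \<in> {3..<n} \<Longrightarrow> cx k \<noteq> 0 \<and> cx k \<noteq> M 1 2 / M 0 2"
proof -
  have line: "M 0 1 * cy k + M 0 2 * cx k = M 1 2" if "k \<in> {3..<n}" for k
  proof -
    have "(4::'a) = 2 * 2" by simp
    then show ?thesis using on_conic[of k] that two by simp
  qed
  show "inj_on cx {3..<n}"
  proof (rule inj_onI)
    fix k l assume k: "k \<in> {3..<n}" and l: "l \<in> {3..<n}" and eq: "cx k = cx l"
    have "M 0 1 * cy k = M 1 2 - M 0 2 * cx k" "M 0 1 * cy l = M 1 2 - M 0 2 * cx l"
      using line[OF k] line[OF l] by (simp_all add: eq_diff_eq)
    then have "M 0 1 * cy k = M 0 1 * cy l" using eq by simp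
    then have "cy k = cy l" using base_entries by simp
    then show "k = l" using points_distinct k l eq by simp
  qed
  fix k assume k: "k \<in> {3..<n}"
  have "cx k \<noteq> M 1 2 / M 0 2"
  proof
    assume "cx k = M 1 2 / M 0 2"
    then have "M 0 2 * cx k = M 1 2" using base_entries by simp
    then have "M 0 1 * cy k = 0" using line[OF k] by simp
    then show False using base_entries vertex_entries(11)[of k] k by simp
  qed
  then show "cx k \<noteq> 0 \<and> cx k \<noteq> M 1 2 / M 0 2" using vertex_entries(10)[of k] k by simp
qed

theorem size_bound:
  assumes fin: "finite (UNIV :: 'a set)"
  shows "n \<le> card (UNIV :: 'a set) + 1"
proof (cases "(2::'a) = 0")
  case False
  show ?thesis
    by (rule card_bound_of_inj_avoiding[OF fin zero_neq_one parameter_char_ne_2(1)[OF False]])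
      (rule parameter_char_ne_2(2)[OF False])
next
  case True
  have "0 \<noteq> M 1 2 / M 0 2" using base_entries by simp
  then show ?thesis
    by (rule card_bound_of_inj_avoiding[OF fin _ parameter_char_2(1)[OF True]])
      (rule parameter_char_2(2)[OF True])
qed

end

section \<open>Minimum rank and independent sets\<close>

lemma S_matD:
  assumes "A \<in> S_mat N E"
  shows "A \<in> carrier_mat N N" and "i < N \<Longrightarrow> j < N \<Longrightarrow> A $$ (i, j) = A $$ (j, i)"
    and "i < N \<Longrightarrow> j < N \<Longrightarrow> i \<noteq> j \<Longrightarrow> A $$ (i, j) \<noteq> 0 \<longleftrightarrow> E i j"
proof -
  show carrier: "A \<in> carrier_mat N N" using assms by (simp add: S_mat_def)
  show "A $$ (i, j) = A $$ (j, i)" if "i < N" "j < N"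
  proof -
    have "A $$ (i, j) = transpose_mat A $$ (j, i)" using that carrier by simp
    then show ?thesis using assms by (simp add: S_mat_def)
  qed
  show "A $$ (i, j) \<noteq> 0 \<longleftrightarrow> E i j" if "i < N" "j < N" "i \<noteq> j"
    using assms that by (simp add: S_mat_def)
qed

lemma minor_reindex:
  "minor (\<lambda>i j. M (f i) (g j)) rs cs = minor M (map f rs) (map g cs)"
  unfolding minor_def by (intro arg_cong[of _ _ det] eq_matI) auto

lemma minor_diagonal:
  assumes dist: "distinct vs" and off: "\<And>u v. u \<in> set vs \<Longrightarrow> v \<in> set vs \<Longrightarrow> u \<noteq> v \<Longrightarrow> M u v = 0"
  shows "minor M vs vs = prod_list (map (\<lambda>v. M v v) vs)"
proof -
  let ?B = "mat (length vs) (length vs) (\<lambda>(i, j). M (vs ! i) (vs ! j))"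
  have "det ?B = prod_list (diag_mat ?B)"
  proof (rule det_lower_triangular)
    fix i j assume ij: "i < j" "j < length vs"
    then have "vs ! i \<noteq> vs ! j" using nth_eq_iff_index_eq[OF dist] by simp
    moreover have "vs ! i \<in> set vs" "vs ! j \<in> set vs" using ij by simp_all
    ultimately show "?B $$ (i, j) = 0" using ij off by simp
  qed simp
  also have "diag_mat ?B = map (\<lambda>v. M v v) vs"
    unfolding diag_mat_def by (rule nth_equalityI) auto
  finally show ?thesis by (simp add: minor_def)
qed

text \<open>An independent set of a graph that is larger than the rank of a matrix in
  \<open>S(F, G)\<close> contains a vertex with zero diagonal entry: the corresponding principal
  minor is diagonal and must vanish.\<close>
lemma independent_set_zero_diagonal:
  fixes A :: "'a::field mat"
  assumes A: "A \<in> S_mat N E" and I: "I \<subseteq> {..<N}" and rank: "vec_space.rank N A < card I"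
    and indep: "\<And>u v. u \<in> I \<Longrightarrow> v \<in> I \<Longrightarrow> \<not> E u v"
  shows "\<exists>v\<in>I. A $$ (v, v) = 0"
proof -
  have fin: "finite I" using I finite_nat_iff_bounded by blast
  define vs where "vs = sorted_list_of_set I"
  have vs: "distinct vs" "set vs = I" "length vs = card I" using fin by (simp_all add: vs_def)
  have "minor (\<lambda>i j. A $$ (i, j)) vs vs = 0"
    by (rule minor_eq_0_if_rank_less[OF S_matD(1)[OF A]]) (use rank I vs in auto)
  moreover have "minor (\<lambda>i j. A $$ (i, j)) vs vs = prod_list (map (\<lambda>v. A $$ (v, v)) vs)"
  proof (rule minor_diagonal)
    fix u v assume "u \<in> set vs" "v \<in> set vs" "u \<noteq> v"
    moreover from this have "u < N" "v < N" "\<not> E u v" using vs I indep by auto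
    ultimately show "A $$ (u, v) = 0" using S_matD(3)[OF A] by blast
  qed (rule vs(1))
  ultimately show ?thesis using vs by (auto simp: prod_list_zero_iff)
qed

text \<open>For a graph given by a symmetric edge relation, \<open>mr(F, G) \<le> r\<close> just means that
  some matrix in \<open>S(F, G)\<close> has rank at most \<open>r\<close>; \<open>S(F, G)\<close> is never empty, as it
  contains the adjacency matrix.\<close>
lemma mr_le_iff:
  assumes sym: "\<And>i j. i < N \<Longrightarrow> j < N \<Longrightarrow> E i j = E j i"
  shows "mr TYPE('a::field) N E \<le> r \<longleftrightarrow> (\<exists>A \<in> (S_mat N E :: 'a mat set). vec_space.rank N A \<le> r)"
proof -
  let ?R = "{vec_space.rank N A | A. A \<in> (S_mat N E :: 'a mat set)}"
  have "?R \<subseteq> {..N}"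
  proof
    fix k assume "k \<in> ?R"
    then obtain A :: "'a mat" where "k = vec_space.rank N A" "A \<in> S_mat N E" by blast
    then show "k \<in> {..N}" using vec_space.rank_le_nc[OF S_matD(1)] by simp
  qed
  then have fin: "finite ?R" by (rule finite_subset) simp
  let ?Adj = "mat N N (\<lambda>(i, j). if E i j then 1 else 0) :: 'a mat"
  have "?Adj \<in> S_mat N E"
    unfolding S_mat_def
  proof (intro CollectI conjI allI impI)
    show "transpose_mat ?Adj = ?Adj" by (rule eq_matI) (simp_all add: sym)
  qed simp_all
  then have "?R \<noteq> {}" by blast
  moreover have "mr TYPE('a) N E = Min ?R" by (simp add: mr_def)
  ultimately show ?thesis using fin by (simp add: Min_le_iff) blast
qed

section \<open>Complete multipartite graphs\<close>

lemma transversal_hollow_rank3: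
  fixes A :: "'a::field mat"
  assumes A: "A \<in> S_mat N (multipartite_edge part)" and rank: "vec_space.rank N A \<le> 3"
    and n: "3 \<le> n" and w: "\<And>i. i < n \<Longrightarrow> w i < N \<and> part (w i) = i \<and> A $$ (w i, w i) = 0"
  shows "hollow_rank3 n (\<lambda>i j. A $$ (w i, w j))"
proof (unfold_locales)
  show "3 \<le> n" by (rule n)
  fix i j assume ij: "i < n" "j < n"
  show "A $$ (w i, w j) = A $$ (w j, w i)" using S_matD(2)[OF A] w ij by simp
  show "A $$ (w i, w i) = 0" using w ij by simp
  assume "i \<noteq> j"
  moreover have "w i < N" "w j < N" "part (w i) = i" "part (w j) = j" using w ij by auto
  ultimately have "w i \<noteq> w j" "multipartite_edge part (w i) (w j)"
    by (auto simp: multipartite_edge_def)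
  then show "A $$ (w i, w j) \<noteq> 0" using S_matD(3)[OF A] w ij by blast
next
  fix rs cs :: "nat list"
  assume rs: "set rs \<subseteq> {..<n}" and cs: "set cs \<subseteq> {..<n}" and len: "length rs = 4" "length cs = 4"
  have "minor (\<lambda>i j. A $$ (i, j)) (map w rs) (map w cs) = 0"
    by (rule minor_eq_0_if_rank_less[OF S_matD(1)[OF A]]) (use rank rs cs len w in auto)
  then show "minor (\<lambda>i j. A $$ (w i, w j)) rs cs = 0"
    using minor_reindex[of "\<lambda>u v. A $$ (u, v)" w w rs cs] by simp
qed

theorem multipartite_rank3_lower_bound:
  fixes A :: "'a::{finite,field} mat"
  assumes A: "A \<in> S_mat N (multipartite_edge part)" and rank: "vec_space.rank N A \<le> 3"
    and n: "3 \<le> n" and large: "\<And>i. i < n \<Longrightarrow> 4 \<le> card {v. v < N \<and> part v = i}"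
  shows "n \<le> card (UNIV :: 'a set) + 1"
proof -
  have "\<exists>v. v < N \<and> part v = i \<and> A $$ (v, v) = 0" if i: "i < n" for i
  proof -
    have "\<exists>v\<in>{v. v < N \<and> part v = i}. A $$ (v, v) = 0"
      by (rule independent_set_zero_diagonal[OF A])
        (use rank large[OF i] in \<open>auto simp: multipartite_edge_def\<close>)
    then show ?thesis by blast
  qed
  then obtain w where "\<And>i. i < n \<Longrightarrow> w i < N \<and> part (w i) = i \<and> A $$ (w i, w i) = 0"
    by metis
  then interpret hollow_rank3 n "\<lambda>i j. A $$ (w i, w j)"
    by (rule transversal_hollow_rank3[OF A rank n])
  show ?thesis by (rule size_bound) simp
qed

text \<open>The points of the projective line \<open>F \<union> {\<infinity>}\<close> are placed on the conic
  \<open>\<beta>\<^sup>2 = \<alpha> \<gamma>\<close> in \<open>F\<^sup>3\<close>; the symmetric bilinear form \<open>polar\<close> (the polarisation of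
  \<open>\<alpha> \<gamma> - \<beta>\<^sup>2\<close>) vanishes on two such points exactly when they coincide.\<close>
definition conic_point :: "'a::field option \<Rightarrow> 'a \<times> 'a \<times> 'a" where
  "conic_point p = (case p of None \<Rightarrow> (0, 0, 1) | Some t \<Rightarrow> (1, t, t * t))"

definition polar :: "'a::field \<times> 'a \<times> 'a \<Rightarrow> 'a \<times> 'a \<times> 'a \<Rightarrow> 'a" where
  "polar P Q = fst P * snd (snd Q) + snd (snd P) * fst Q - 2 * fst (snd P) * fst (snd Q)"

lemma polar_commute: "polar P Q = polar Q P"
  by (simp add: polar_def algebra_simps)

text \<open>Two conic points are orthogonal for \<open>polar\<close> exactly when they coincide;
  for affine points \<open>s, t\<close> the value is \<open>(s - t)\<^sup>2\<close>.\<close>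
lemma polar_conic_point_eq_0_iff: "polar (conic_point p) (conic_point q) = 0 \<longleftrightarrow> p = q"
proof (cases p; cases q)
  fix s t assume "p = Some s" "q = Some t"
  moreover have "1 * (t * t) + s * s * 1 - 2 * s * t = (s - t)^2"
    by (simp add: algebra_simps power2_eq_square)
  ultimately show ?thesis by (simp add: conic_point_def polar_def)
qed (simp_all add: conic_point_def polar_def)

text \<open>A Gram matrix of the form \<open>polar\<close> has rank at most 3, being a sum of three
  matrices of rank at most one.\<close>
lemma polar_gram_rank_le_3:
  fixes P :: "nat \<Rightarrow> 'a::field \<times> 'a \<times> 'a"
  shows "vec_space.rank N (mat N N (\<lambda>(u, v). polar (P u) (P v))) \<le> 3"
proof -
  define \<alpha> where "\<alpha> = (\<lambda>u. fst (P u))"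
  define \<beta> where "\<beta> = (\<lambda>u. fst (snd (P u)))"
  define \<gamma> where "\<gamma> = (\<lambda>u. snd (snd (P u)))"
  define A1 where "A1 = mat N N (\<lambda>(u, v). \<alpha> u * \<gamma> v)"
  define A2 where "A2 = mat N N (\<lambda>(u, v). \<gamma> u * \<alpha> v)"
  define A3 where "A3 = mat N N (\<lambda>(u, v). (- 2 * \<beta> u) * \<beta> v)"
  have car: "A1 \<in> carrier_mat N N" "A2 \<in> carrier_mat N N" "A3 \<in> carrier_mat N N"
    unfolding A1_def A2_def A3_def by auto
  have "vec_space.rank N A1 \<le> 1" "vec_space.rank N A2 \<le> 1" "vec_space.rank N A3 \<le> 1"
    by (rule vec_space.rank_le_1_product_entries[OF car(1)], simp add: A1_def)
      (rule vec_space.rank_le_1_product_entries[OF car(2)], simp add: A2_def,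
       rule vec_space.rank_le_1_product_entries[OF car(3), of "\<lambda>u. - 2 * \<beta> u" \<beta>], simp add: A3_def)
  then have "vec_space.rank N (A1 + A2 + A3) \<le> 3"
    using vec_space.rank_subadditive[OF car(1,2)] vec_space.rank_subadditive[OF _ car(3), of "A1 + A2"] car
    by simp
  moreover have "mat N N (\<lambda>(u, v). polar (P u) (P v)) = A1 + A2 + A3"
    using car by (intro eq_matI) (auto simp: A1_def A2_def A3_def \<alpha>_def \<beta>_def \<gamma>_def polar_def)
  ultimately show ?thesis by simp
qed

theorem multipartite_rank3_construction:
  fixes part :: "nat \<Rightarrow> nat"
  assumes parts: "\<forall>v<N. part v < n" and q: "n \<le> card (UNIV :: 'a::{finite,field} set) + 1"
  shows "\<exists>A \<in> (S_mat N (multipartite_edge part) :: 'a mat set). vec_space.rank N A \<le> 3"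
proof -
  have "card {..<n} \<le> card (UNIV :: 'a option set)" using q by simp
  then obtain \<tau> :: "nat \<Rightarrow> 'a option" where \<tau>: "inj_on \<tau> {..<n}"
    using card_le_inj[of "{..<n}" "UNIV :: 'a option set"] by auto
  define A where "A = mat N N (\<lambda>(u, v). polar (conic_point (\<tau> (part u))) (conic_point (\<tau> (part v))))"
  have "A \<in> S_mat N (multipartite_edge part)"
    unfolding S_mat_def
  proof (intro CollectI conjI allI impI)
    show "A \<in> carrier_mat N N" by (simp add: A_def)
    show "transpose_mat A = A" by (rule eq_matI) (auto simp: A_def polar_commute)
    fix u v assume uv: "u < N" "v < N" "u \<noteq> v"
    have "\<tau> (part u) = \<tau> (part v) \<longleftrightarrow> part u = part v"
      using \<tau> parts uv by (auto dest: inj_onD)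
    then show "A $$ (u, v) \<noteq> 0 \<longleftrightarrow> multipartite_edge part u v"
      using uv by (simp add: A_def polar_conic_point_eq_0_iff multipartite_edge_def)
  qed
  moreover have "vec_space.rank N A \<le> 3"
    unfolding A_def by (rule polar_gram_rank_le_3)
  ultimately show ?thesis by blast
qed

text \<open>The theorem: both bounds together, plus the observation that for \<open>n \<ge> 3\<close> every
  part has more than \<open>(n - 1)\<^sup>2 \<ge> 4\<close> vertices, while for \<open>n \<le> 2\<close> there is nothing to prove.\<close>
theorem mainTheorem19:
  fixes n N :: nat and part :: "nat \<Rightarrow> nat"
  assumes "n \<ge> 1"
    and "\<forall>v<N. part v < n"
    and "\<forall>i<n. card {v. v < N \<and> part v = i} > (n - 1)^2"
  shows "mr TYPE('a::{finite,field}) N (multipartite_edge part) \<le> 3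
         \<longleftrightarrow> card (UNIV :: 'a set) \<ge> n - 1"
proof -
  have "mr TYPE('a) N (multipartite_edge part) \<le> 3 \<longleftrightarrow>
      (\<exists>A \<in> (S_mat N (multipartite_edge part) :: 'a mat set). vec_space.rank N A \<le> 3)"
    by (rule mr_le_iff) (auto simp: multipartite_edge_def)
  also have "\<dots> \<longleftrightarrow> n \<le> card (UNIV :: 'a set) + 1"
  proof
    assume "\<exists>A \<in> (S_mat N (multipartite_edge part) :: 'a mat set). vec_space.rank N A \<le> 3"
    then obtain A :: "'a mat" where A: "A \<in> S_mat N (multipartite_edge part)" "vec_space.rank N A \<le> 3"
      by blast
    show "n \<le> card (UNIV :: 'a set) + 1"
    proof (cases "3 \<le> n")
      case True
      have "(2::nat)^2 \<le> (n - 1)^2" using True by (intro power_mono) auto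
      then show ?thesis
        using multipartite_rank3_lower_bound[OF A True] assms(3) by force
    next
      case False
      moreover have "0 < card (UNIV :: 'a set)" by simp
      ultimately show ?thesis by linarith
    qed
  qed (rule multipartite_rank3_construction[OF assms(2)])
  finally show ?thesis by linarith
qed

end
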